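(* For any $h\in[1,k]$ and any $p\in\mathbb{N}$, the companion matrix $A=A(s)$ satisfies $$(-1)^{k-h}\frac{\partial A^p}{\partial s_h}=\frac{\partial A^p}{\partial s_k}A^{k-h}.$$
   Context: Fix an integer $k\ge 2$ and coordinates $s=(s_1,\dots,s_k)$ on $\mathbb{C}^k$. $A(s)$ is the $(k,k)$ companion matrix of $P_s(z)=\sum_{h=0}^k(-1)^hs_hz^{k-h}$ ($s_0=1$): its entries are $A_{i,i+1}=1$ for $i\in[1,k-1]$, its last row is $A_{k,j}=(-1)^{k-j}s_{k+1-j}$ for $j\in[1,k]$, and all other entries are $0$. *)

theory Defs
  imports "HOL-Analysis.Derivative" "Jordan_Normal_Form.Matrix"
begin

text \<open>The coordinate s_h (1 \<le> h \<le> k)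
  is the value s h of a function s :: nat \<Rightarrow> complex; other values are irrelevant.
  Row i (0-based) with i < k-1 has a 1 in column i+1; the last row has entry
  (-1)^(k-1-j) * s (k-j) in column j (0-based), i.e. A_{k,j} = (-1)^(k-j) s_{k+1-j} 1-based.\<close>
definition companion :: "nat \<Rightarrow> (nat \<Rightarrow> complex) \<Rightarrow> complex mat" where
  "companion k s = mat k k (\<lambda>(i,j).
     if i + 1 < k \<and> j = i + 1 then 1
     else if i + 1 = k then (-1) ^ (k - 1 - j) * s (k - j)
     else 0)"

definition dpow :: "nat \<Rightarrow> nat \<Rightarrow> nat \<Rightarrow> (nat \<Rightarrow> complex) \<Rightarrow> complex mat" where
  "dpow k h p s = mat k k (\<lambda>(i,j).
     deriv (\<lambda>t. (companion k (s(h := t)) ^\<^sub>m p) $$ (i,j)) (s h))"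

end

theory Submission
  imports Defs
begin

text \<open>The partial derivative of \<open>A(s)\<close> with respect to \<open>s\<^sub>h\<close> is the constant matrix
  \<open>E\<^sub>h = (-1)\<^sup>h\<^sup>-\<^sup>1 e\<^sub>k e\<^sub>k\<^sub>+\<^sub>1\<^sub>-\<^sub>h\<^sup>T\<close>, so the product rule gives
  \<open>\<partial>A\<^sup>p/\<partial>s\<^sub>h = \<Sum>\<^sub>i\<^sub><\<^sub>p A\<^sup>i E\<^sub>h A\<^sup>p\<^sup>-\<^sup>1\<^sup>-\<^sup>i\<close>.
  For \<open>j < k\<close> the \<open>j\<close>-th row of \<open>A\<close> is \<open>e\<^sub>j\<^sub>+\<^sub>1\<^sup>T\<close>, hence \<open>e\<^sub>1\<^sup>T A\<^sup>k\<^sup>-\<^sup>h = e\<^sub>k\<^sub>+\<^sub>1\<^sub>-\<^sub>h\<^sup>T\<close> and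
  \<open>E\<^sub>k A\<^sup>k\<^sup>-\<^sup>h = (-1)\<^sup>k\<^sup>-\<^sup>h E\<^sub>h\<close>. As \<open>A\<^sup>k\<^sup>-\<^sup>h\<close> commutes with \<open>A\<close>, multiplying the sum for \<open>h = k\<close>
  on the right by \<open>A\<^sup>k\<^sup>-\<^sup>h\<close> turns it term by term into \<open>(-1)\<^sup>k\<^sup>-\<^sup>h\<close> times the sum for \<open>h\<close>.\<close>

definition single_entry_mat :: "nat \<Rightarrow> nat \<Rightarrow> nat \<Rightarrow> 'a::zero \<Rightarrow> 'a mat" where
  "single_entry_mat n a b c = mat n n (\<lambda>(i,j). if i = a \<and> j = b then c else 0)"

lemma single_entry_mat_carrier [simp]: "single_entry_mat n a b c \<in> carrier_mat n n"
  by (simp add: single_entry_mat_def)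

lemma single_entry_mat_dim [simp]:
  "dim_row (single_entry_mat n a b c) = n" "dim_col (single_entry_mat n a b c) = n"
  by (simp_all add: single_entry_mat_def)

lemma single_entry_mat_index [simp]:
  "i < n \<Longrightarrow> j < n \<Longrightarrow> single_entry_mat n a b c $$ (i,j) = (if i = a \<and> j = b then c else 0)"
  by (simp add: single_entry_mat_def)

lemma single_entry_mat_smult:
  "single_entry_mat n a b (c * d) = c \<cdot>\<^sub>m single_entry_mat n a b (d :: 'a::semiring_0)"
  by (rule eq_matI) (auto simp: single_entry_mat_def)

lemma pow_mat_commute:
  assumes "A \<in> carrier_mat n n" "B \<in> carrier_mat n n" "A * B = B * A"
  shows "A ^\<^sub>m m * B = B * A ^\<^sub>m m"
proof (induction m)
  case 0
  show ?case using assms by simp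
next
  case (Suc m)
  have "A ^\<^sub>m Suc m * B = A ^\<^sub>m m * (A * B)"
    using assms by (simp add: assoc_mult_mat[of _ n n _ n _ n])
  also have "\<dots> = (A ^\<^sub>m m * B) * A"
    using assms by (simp add: assoc_mult_mat[of _ n n _ n _ n])
  also have "\<dots> = B * A ^\<^sub>m Suc m"
    using assms by (simp add: Suc assoc_mult_mat[of _ n n _ n _ n])
  finally show ?case .
qed

text \<open>\<open>mat_pow_deriv A D p\<close> is the derivative of \<open>A\<^sup>p\<close> in a direction in which \<open>A\<close> has
  derivative \<open>D\<close>, obtained from the product rule for \<open>A\<^sup>p\<^sup>+\<^sup>1 = A\<^sup>p A\<close>.\<close>

fun mat_pow_deriv :: "'a::semiring_1 mat \<Rightarrow> 'a mat \<Rightarrow> nat \<Rightarrow> 'a mat" where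
  "mat_pow_deriv A D 0 = 0\<^sub>m (dim_row A) (dim_col A)"
| "mat_pow_deriv A D (Suc p) = mat_pow_deriv A D p * A + A ^\<^sub>m p * D"

lemma mat_pow_deriv_carrier [simp]:
  "A \<in> carrier_mat n n \<Longrightarrow> D \<in> carrier_mat n n \<Longrightarrow> mat_pow_deriv A D p \<in> carrier_mat n n"
  by (induction p) auto

lemma pow_mat_index_has_field_derivative:
  fixes A :: "'a::real_normed_field \<Rightarrow> 'a mat"
  assumes carrier: "\<And>t. A t \<in> carrier_mat n n" and D: "D \<in> carrier_mat n n"
    and entry_deriv: "\<And>i j. i < n \<Longrightarrow> j < n \<Longrightarrow>
      ((\<lambda>t. A t $$ (i,j)) has_field_derivative D $$ (i,j)) (at x)"
    and "i < n" "j < n"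
  shows "((\<lambda>t. (A t ^\<^sub>m p) $$ (i,j)) has_field_derivative mat_pow_deriv (A x) D p $$ (i,j)) (at x)"
  using \<open>i < n\<close> \<open>j < n\<close>
proof (induction p arbitrary: i j)
  case 0
  have "(A t ^\<^sub>m 0) $$ (i,j) = (if i = j then 1 else 0)" for t
    using 0 carrier[of t] by (simp add: carrier_matD)
  then show ?case
    using 0 carrier[of x] by (simp add: carrier_matD)
next
  case (Suc p)
  have pow_entry: "(A t ^\<^sub>m Suc p) $$ (i,j) = (\<Sum>l<n. (A t ^\<^sub>m p) $$ (i,l) * A t $$ (l,j))" for t
    using Suc.prems carrier[of t] by (simp add: scalar_prod_def atLeast0LessThan carrier_matD)
  have deriv_entry: "mat_pow_deriv (A x) D (Suc p) $$ (i,j) =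
      (\<Sum>l<n. mat_pow_deriv (A x) D p $$ (i,l) * A x $$ (l,j) + (A x ^\<^sub>m p) $$ (i,l) * D $$ (l,j))"
    using Suc.prems carrier[of x] D carrier_matD[OF mat_pow_deriv_carrier[OF carrier[of x] D, of p]]
    by (simp add: scalar_prod_def sum.distrib atLeast0LessThan carrier_matD)
  show ?case
    unfolding pow_entry deriv_entry
  proof (rule DERIV_sum)
    fix l assume "l \<in> {..<n}"
    then have "((\<lambda>t. (A t ^\<^sub>m p) $$ (i,l) * A t $$ (l,j)) has_field_derivative
        mat_pow_deriv (A x) D p $$ (i,l) * A x $$ (l,j) + D $$ (l,j) * (A x ^\<^sub>m p) $$ (i,l)) (at x)"
      using Suc.prems by (intro DERIV_mult Suc.IH entry_deriv) auto
    then show "((\<lambda>t. (A t ^\<^sub>m p) $$ (i,l) * A t $$ (l,j)) has_field_derivative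
        mat_pow_deriv (A x) D p $$ (i,l) * A x $$ (l,j) + (A x ^\<^sub>m p) $$ (i,l) * D $$ (l,j)) (at x)"
      by (simp only: mult.commute)
  qed
qed

lemma mat_pow_deriv_mult_commuting:
  fixes A :: "'a::comm_semiring_1 mat"
  assumes carrier: "A \<in> carrier_mat n n" "D \<in> carrier_mat n n" "D' \<in> carrier_mat n n"
      "B \<in> carrier_mat n n"
    and commute: "A * B = B * A" and scaled: "D' * B = c \<cdot>\<^sub>m D"
  shows "c \<cdot>\<^sub>m mat_pow_deriv A D p = mat_pow_deriv A D' p * B"
proof (induction p)
  case 0
  show ?case using carrier by simp
next
  case (Suc p)
  let ?X = "mat_pow_deriv A D p" and ?Y = "mat_pow_deriv A D' p"
  have X: "?X \<in> carrier_mat n n" and Y: "?Y \<in> carrier_mat n n"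
    using carrier by simp_all
  have "c \<cdot>\<^sub>m mat_pow_deriv A D (Suc p) = c \<cdot>\<^sub>m (?X * A) + c \<cdot>\<^sub>m (A ^\<^sub>m p * D)"
    using carrier X by (simp add: add_smult_distrib_left_mat[of _ n n] mult_carrier_mat[of _ n n])
  also have "\<dots> = (c \<cdot>\<^sub>m ?X) * A + A ^\<^sub>m p * (c \<cdot>\<^sub>m D)"
    using carrier X by (simp add: mult_smult_assoc_mat[of _ n n] mult_smult_distrib[of _ n n])
  also have "\<dots> = ?Y * (B * A) + A ^\<^sub>m p * (D' * B)"
    using carrier Y by (simp add: Suc scaled assoc_mult_mat[of _ n n _ n _ n])
  also have "\<dots> = (?Y * A) * B + (A ^\<^sub>m p * D') * B"
    using carrier Y by (simp add: commute assoc_mult_mat[of _ n n _ n _ n])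
  also have "\<dots> = (?Y * A + A ^\<^sub>m p * D') * B"
    using carrier Y by (simp add: add_mult_distrib_mat[of _ n n] mult_carrier_mat[of _ n n])
  finally show ?case by simp
qed

lemma companion_carrier [simp]: "companion k s \<in> carrier_mat k k"
  by (simp add: companion_def)

lemma companion_dim [simp]: "dim_row (companion k s) = k" "dim_col (companion k s) = k"
  by (simp_all add: companion_def)

lemma companion_index:
  "i < k \<Longrightarrow> j < k \<Longrightarrow> companion k s $$ (i,j) =
    (if i + 1 < k \<and> j = i + 1 then 1 else if i + 1 = k then (-1) ^ (k - 1 - j) * s (k - j) else 0)"
  by (simp add: companion_def)

definition companion_partial :: "nat \<Rightarrow> nat \<Rightarrow> complex mat" where
  "companion_partial k h = single_entry_mat k (k - 1) (k - h) ((-1) ^ (h - 1))"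

lemma companion_partial_carrier [simp]: "companion_partial k h \<in> carrier_mat k k"
  by (simp add: companion_partial_def)

lemma companion_fun_upd:
  assumes "1 \<le> h" "h \<le> k"
  shows "companion k (s(h := t)) = companion k (s(h := 0)) + t \<cdot>\<^sub>m companion_partial k h"
proof (rule eq_matI)
  fix i j assume "i < dim_row (companion k (s(h := 0)) + t \<cdot>\<^sub>m companion_partial k h)"
    "j < dim_col (companion k (s(h := 0)) + t \<cdot>\<^sub>m companion_partial k h)"
  then have ij: "i < k" "j < k" by (simp_all add: companion_partial_def)
  consider "i + 1 < k" | "i + 1 = k" "j = k - h" | "i + 1 = k" "j \<noteq> k - h"
    using ij by linarith
  then show "companion k (s(h := t)) $$ (i,j) =
      (companion k (s(h := 0)) + t \<cdot>\<^sub>m companion_partial k h) $$ (i,j)"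
  proof cases
    case 1
    then have "i \<noteq> k - 1" by linarith
    then show ?thesis using ij 1 by (simp add: companion_index companion_partial_def)
  next
    case 2
    then have "k - j = h" "k - 1 - j = h - 1" using assms by simp_all
    then show ?thesis using ij 2 by (simp add: companion_index companion_partial_def)
  next
    case 3
    then have "k - j \<noteq> h" using ij by simp
    then show ?thesis using ij 3 by (simp add: companion_index companion_partial_def)
  qed
qed (simp_all add: companion_def companion_partial_def)

lemma companion_index_has_field_derivative:
  assumes "1 \<le> h" "h \<le> k" "i < k" "j < k"
  shows "((\<lambda>t. companion k (s(h := t)) $$ (i,j)) has_field_derivative
    companion_partial k h $$ (i,j)) (at x)"
proof -
  have "(\<lambda>t. companion k (s(h := t)) $$ (i,j)) =
      (\<lambda>t. companion k (s(h := 0)) $$ (i,j) + t * companion_partial k h $$ (i,j))"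
    using assms by (subst companion_fun_upd[OF assms(1,2)]) (simp_all add: companion_partial_def)
  then show ?thesis
    by (auto intro!: derivative_eq_intros)
qed

lemma dpow_eq_mat_pow_deriv:
  assumes "1 \<le> h" "h \<le> k"
  shows "dpow k h p s = mat_pow_deriv (companion k s) (companion_partial k h) p"
proof -
  have dims: "dim_row (mat_pow_deriv (companion k s) (companion_partial k h) p) = k"
    "dim_col (mat_pow_deriv (companion k s) (companion_partial k h) p) = k"
    using carrier_matD[OF mat_pow_deriv_carrier[OF companion_carrier companion_partial_carrier]]
    by simp_all
  have "dpow k h p s $$ (i,j) = mat_pow_deriv (companion k s) (companion_partial k h) p $$ (i,j)"
    if ij: "i < k" "j < k" for i j
  proof -
    have "((\<lambda>t. (companion k (s(h := t)) ^\<^sub>m p) $$ (i,j)) has_field_derivative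
        mat_pow_deriv (companion k (s(h := s h))) (companion_partial k h) p $$ (i,j)) (at (s h))"
      by (rule pow_mat_index_has_field_derivative)
         (use ij assms companion_index_has_field_derivative in auto)
    then show ?thesis
      using ij by (simp add: dpow_def DERIV_imp_deriv)
  qed
  then show ?thesis
    by (intro eq_matI) (simp_all add: dims dpow_def)
qed

lemma single_entry_mat_mult_companion:
  assumes "m + 1 < k"
  shows "single_entry_mat k a m c * companion k s = single_entry_mat k a (m + 1) c"
proof (rule eq_matI)
  fix i j assume "i < dim_row (single_entry_mat k a (m + 1) c)"
    "j < dim_col (single_entry_mat k a (m + 1) c)"
  then have ij: "i < k" "j < k" by simp_all
  have "(single_entry_mat k a m c * companion k s) $$ (i,j) =
      (\<Sum>l<k. single_entry_mat k a m c $$ (i,l) * companion k s $$ (l,j))"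
    using ij by (simp add: single_entry_mat_def scalar_prod_def atLeast0LessThan)
  also have "\<dots> = (\<Sum>l<k. if l = m then (if i = a then c else 0) * companion k s $$ (m,j) else 0)"
    using ij by (intro sum.cong) auto
  also have "\<dots> = single_entry_mat k a (m + 1) c $$ (i,j)"
    using assms ij by (simp add: companion_index)
  finally show "(single_entry_mat k a m c * companion k s) $$ (i,j) =
      single_entry_mat k a (m + 1) c $$ (i,j)" .
qed simp_all

lemma single_entry_mat_mult_companion_pow:
  "m < k \<Longrightarrow> single_entry_mat k a 0 c * companion k s ^\<^sub>m m = single_entry_mat k a m c"
proof (induction m)
  case 0
  show ?case by simp
next
  case (Suc m)
  have "single_entry_mat k a 0 c * companion k s ^\<^sub>m Suc m =
      (single_entry_mat k a 0 c * companion k s ^\<^sub>m m) * companion k s"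
    by (simp add: assoc_mult_mat[of _ k k _ k _ k])
  then show ?case
    using Suc by (simp add: single_entry_mat_mult_companion)
qed

lemma companion_partial_mult_companion_pow:
  assumes "1 \<le> h" "h \<le> k"
  shows "companion_partial k k * companion k s ^\<^sub>m (k - h) = (-1) ^ (k - h) \<cdot>\<^sub>m companion_partial k h"
proof -
  have "companion_partial k k * companion k s ^\<^sub>m (k - h) =
      single_entry_mat k (k - 1) (k - h) ((-1) ^ (k - 1))"
    using assms by (simp add: companion_partial_def single_entry_mat_mult_companion_pow)
  also have "(-1 :: complex) ^ (k - 1) = (-1) ^ (k - h) * (-1) ^ (h - 1)"
    using assms by (simp flip: power_add)
  finally show ?thesis
    by (simp add: companion_partial_def single_entry_mat_smult)
qed

theorem mainTheorem6:
  fixes k h p :: nat and s :: "nat \<Rightarrow> complex"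
  assumes "2 \<le> k" and "1 \<le> h" and "h \<le> k"
  shows "((-1) ^ (k - h)) \<cdot>\<^sub>m dpow k h p s = dpow k k p s * (companion k s ^\<^sub>m (k - h))"
proof -
  let ?A = "companion k s"
  have "((-1) ^ (k - h)) \<cdot>\<^sub>m mat_pow_deriv ?A (companion_partial k h) p =
      mat_pow_deriv ?A (companion_partial k k) p * ?A ^\<^sub>m (k - h)"
    by (rule mat_pow_deriv_mult_commuting[OF companion_carrier companion_partial_carrier
          companion_partial_carrier pow_carrier_mat[OF companion_carrier]
          pow_mat_commute[OF companion_carrier companion_carrier refl, symmetric]
          companion_partial_mult_companion_pow[OF assms(2,3)]])
  then show ?thesis
    using assms by (simp add: dpow_eq_mat_pow_deriv)
qed

end
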